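(* Let $A$ be a commutative unital ring, let $R$ be a positive totally ordered aura with tempered growth, and let $|\cdot|:A\to R$ be a power-multiplicative generalized seminorm. Then $|\cdot|$ is pre-archimedean, i.e. $$|a+b|\leq \max(|2|,1)\cdot\max(|a|,|b|)\quad\text{for all }a,b\in A,$$ where $2=1+1\in A$. If moreover $|2|>1$, then the restriction $|\cdot|_{|\mathbb{Z}}$ (the composite $\mathbb{Z}\to A\xrightarrow{|\cdot|}R$ of the canonical ring map with $|\cdot|$) is multiplicatively equivalent to the archimedean seminorm $|\cdot|_\infty:\mathbb{Z}\to\mathbb{Q}_{+}$, $|n|_\infty=\max(n,-n)$.
   Context: All semirings are commutative and unital. A halo is a semiring with a partial order $\leq$ compatible with its operations: $x\leq z$ and $y\leq t$ imply $xy\leq zt$ and $x+y\leq z+t$. A halo morphism $f:A\to B$ is an increasing map with $f(0)=0$, $f(1)=1$, $f(a+b)\leq f(a)+f(b)$ and $f(ab)\leq f(a)f(b)$. A ring is regarded as a halo with the trivial (equality) order. An aura is a halo whose underlying semiring is a semifield; it is positive if $0<1$. For $n\in\mathbb{N}$, $n$ also denotes $1+\dots+1$ ($n$ times) in any semiring. A halo $R$ has tempered growth if for every non-zero polynomial $P\in\mathbb{N}[X]$ and every $x\in R$, ($x^n\leq P(n)$ in $R$ for all $n\in\mathbb{N}$) implies $x\leq 1$. A generalized seminorm on a ring $A$ is a halo morphism $|\cdot|:A\to R$ into a positive totally ordered aura $R$; it is power-multiplicative if $|a^n|=|a|^n$ for all $a\in A$, $n\in\mathbb{N}$. The set $\mathbb{Q}_+$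 of non-negative rationals with usual operations and order is a positive totally ordered aura. Given halo morphisms $|\cdot|_1:A\to R$, $|\cdot|_2:A\to S$, write $|\cdot|_1\leq_m|\cdot|_2$ if for all $a,b,c\in A$, $|a|_2|c|_2\leq|b|_2$ implies $|a|_1|c|_1\leq|b|_1$; they are multiplicatively equivalent if $|\cdot|_1\leq_m|\cdot|_2$ and $|\cdot|_2\leq_m|\cdot|_1$. *)

theory Defs
  imports Complex_Main "HOL-Computational_Algebra.Polynomial"
begin

text \<open>The aura R is modelled as a type 'r whose commutative unital semiring
structure is given by the class comm_semiring_1 and whose total order is given
by the class linorder (a priori unrelated to the arithmetic).\<close>

definition pos_tot_aura :: "'r::{comm_semiring_1,linorder} itself \<Rightarrow> bool" where
  "pos_tot_aura _ \<longleftrightarrow>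
     (\<forall>x y z t :: 'r. x \<le> z \<longrightarrow> y \<le> t \<longrightarrow> x * y \<le> z * t \<and> x + y \<le> z + t) \<and>
     (\<forall>x :: 'r. x \<noteq> 0 \<longrightarrow> (\<exists>y. x * y = 1)) \<and>
     (0::'r) < 1"

definition tempered_growth :: "'r::{comm_semiring_1,linorder} itself \<Rightarrow> bool" where
  "tempered_growth _ \<longleftrightarrow>
     (\<forall>(P :: nat poly) (x :: 'r). P \<noteq> 0 \<longrightarrow>
        (\<forall>n::nat. x ^ n \<le> of_nat (poly P n)) \<longrightarrow> x \<le> 1)"

text \<open>Halo morphism from a ring (trivial order, so monotonicity is automatic)
  into an ordered semiring.\<close>

definition halo_morphism_from_ring ::
  "('a::comm_ring_1 \<Rightarrow> 'r::{comm_semiring_1,linorder}) \<Rightarrow> bool" where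
  "halo_morphism_from_ring f \<longleftrightarrow>
     f 0 = 0 \<and> f 1 = 1 \<and>
     (\<forall>a b. f (a + b) \<le> f a + f b) \<and>
     (\<forall>a b. f (a * b) \<le> f a * f b)"

definition power_multiplicative ::
  "('a::comm_ring_1 \<Rightarrow> 'r::comm_semiring_1) \<Rightarrow> bool" where
  "power_multiplicative f \<longleftrightarrow> (\<forall>a (n::nat). f (a ^ n) = f a ^ n)"

definition mult_le ::
  "('a \<Rightarrow> 'r::{times,ord}) \<Rightarrow> ('a \<Rightarrow> 's::{times,ord}) \<Rightarrow> bool" where
  "mult_le f1 f2 \<longleftrightarrow>
     (\<forall>a b c. f2 a * f2 c \<le> f2 b \<longrightarrow> f1 a * f1 c \<le> f1 b)"

definition mult_equiv ::
  "('a \<Rightarrow> 'r::{times,ord}) \<Rightarrow> ('a \<Rightarrow> 's::{times,ord}) \<Rightarrow> bool" where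
  "mult_equiv f1 f2 \<longleftrightarrow> mult_le f1 f2 \<and> mult_le f2 f1"

definition arch_abs :: "int \<Rightarrow> rat" where
  "arch_abs n = of_int (max n (- n))"

end

theory Submission
  imports Defs
begin

text \<open>
  Power-multiplicativity plus tempered growth make polynomial factors invisible:
  if \<open>X\<^sup>k \<le> P(k) D\<^sup>k\<close> for all \<open>k\<close>, then \<open>X \<le> D\<close>.
  Writing \<open>N \<le> m\<^sup>j\<close> in base \<open>m\<close> bounds \<open>|N|\<close> by \<open>(j+1) m \<cdot> max(|m|,1)\<^sup>j\<close>, i.e.
  polynomially in \<open>j\<close>. Expanding \<open>(a+b)\<^sup>n\<close> binomially with \<open>binom n k \<le> 2\<^sup>n\<close> then gives
  \<open>|a+b|\<^sup>n \<le> P(n) (max(|2|,1) max(|a|,|b|))\<^sup>n\<close>, hence pre-archimedean.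
  Likewise \<open>n\<^sup>q \<le> m\<^sup>p\<close> implies \<open>|n|\<^sup>q \<le> max(|m|,1)\<^sup>p\<close>. When \<open>|2| > 1\<close> this forces
  \<open>|m| \<ge> 1\<close> for \<open>m \<ge> 1\<close>, so \<open>|\<cdot>|\<close> is monotone on \<open>\<nat>\<close>; squeezing \<open>a\<^sup>k\<close>, \<open>c\<^sup>k\<close> between
  powers of 2 shows it is multiplicative on \<open>\<nat>\<close>, and then strictly monotone
  (else \<open>|2| |n|\<^sup>k \<le> |n+1|\<^sup>k \<le> |n|\<^sup>k\<close>). A multiplicative, strictly monotone map
  \<open>\<nat> \<rightarrow> R\<close> reflects and preserves \<open>AC \<le> B\<close>, which is multiplicative equivalence
  with \<open>|\<cdot>|\<^sub>\<infinity>\<close>.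
\<close>

context
  fixes TT :: "'r::{comm_semiring_1,linorder} itself"
  assumes aura: "pos_tot_aura TT"
begin

lemma aura_mult_mono: "(x::'r) \<le> z \<Longrightarrow> y \<le> t \<Longrightarrow> x * y \<le> z * t"
  using aura unfolding pos_tot_aura_def by blast

lemma aura_add_mono: "(x::'r) \<le> z \<Longrightarrow> y \<le> t \<Longrightarrow> x + y \<le> z + t"
  using aura unfolding pos_tot_aura_def by blast

lemma aura_inverse_ex: "(x::'r) \<noteq> 0 \<Longrightarrow> \<exists>y. x * y = 1"
  using aura unfolding pos_tot_aura_def by blast

lemma aura_zero_less_one: "(0::'r) < 1"
  using aura unfolding pos_tot_aura_def by blast

text \<open>An invertible \<open>x < 0\<close> would give \<open>1 = x y \<le> 0\<close>, comparing \<open>y\<close> with \<open>0\<close> either way.\<close>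

lemma aura_nonneg: "(0::'r) \<le> x"
proof (rule ccontr)
  assume "\<not> 0 \<le> x"
  hence x: "x \<le> 0" "x \<noteq> 0" by auto
  obtain y where y: "x * y = 1" using aura_inverse_ex x(2) by blast
  have "x * y \<le> 0"
  proof (cases "y \<le> 0")
    case True
    then show ?thesis using aura_mult_mono[OF x(1) True] by simp
  next
    case False
    then show ?thesis using aura_mult_mono[OF x(1), of y y] by simp
  qed
  thus False using y aura_zero_less_one by simp
qed

lemma aura_no_zero_divisors: "(x::'r) * y = 0 \<Longrightarrow> x = 0 \<or> y = 0"
proof (rule ccontr)
  assume h: "x * y = 0" "\<not> (x = 0 \<or> y = 0)"
  then obtain x' where x': "x * x' = 1" using aura_inverse_ex by blast
  have "y = x' * (x * y)" using x' by (metis mult.assoc mult.commute mult_1_left)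
  with h show False by simp
qed

lemma aura_mult_right_le_cancel: "(y::'r) \<noteq> 0 \<Longrightarrow> x * y \<le> z * y \<Longrightarrow> x \<le> z"
proof -
  assume y: "y \<noteq> 0" and le: "x * y \<le> z * y"
  obtain y' where y': "y * y' = 1" using aura_inverse_ex y by blast
  have "x * y * y' \<le> z * y * y'" using aura_mult_mono[OF le, of y' y'] by simp
  thus ?thesis using y' by (simp add: mult.assoc)
qed

lemma aura_power_mono: "(x::'r) \<le> y \<Longrightarrow> x ^ n \<le> y ^ n"
  by (induction n) (auto intro: aura_mult_mono)

lemma aura_one_le_power: "(1::'r) \<le> x \<Longrightarrow> 1 \<le> x ^ n"
  using aura_power_mono[of 1 x n] by simp

lemma aura_of_nat_mono: "i \<le> j \<Longrightarrow> (of_nat i::'r) \<le> of_nat j"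
proof -
  assume "i \<le> j"
  then obtain d where d: "j = i + d" using le_Suc_ex by blast
  have "of_nat i + 0 \<le> (of_nat i + of_nat d::'r)"
    using aura_add_mono[OF order_refl aura_nonneg] by blast
  thus ?thesis using d by simp
qed

lemma aura_sum_mono: "(\<And>i. i \<in> S \<Longrightarrow> g i \<le> (h i::'r)) \<Longrightarrow> sum g S \<le> sum h S"
proof (induction S rule: infinite_finite_induct)
  case (insert x F)
  then show ?case by (simp add: aura_add_mono)
qed auto

lemma tempered_growth_le:
  assumes tempered: "tempered_growth TT" and P: "P \<noteq> 0" and D: "(D::'r) \<noteq> 0"
    and le: "\<And>k. X ^ k \<le> of_nat (poly P k) * D ^ k"
  shows "X \<le> D"
proof -
  obtain y where y: "D * y = 1" using aura_inverse_ex D by blast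
  have "\<forall>k. (X * y) ^ k \<le> of_nat (poly P k)"
  proof
    fix k
    have "X ^ k * y ^ k \<le> of_nat (poly P k) * D ^ k * y ^ k"
      using aura_mult_mono[OF le order_refl] .
    also have "\<dots> = of_nat (poly P k) * (D * y) ^ k"
      by (simp add: power_mult_distrib mult.assoc)
    finally show "(X * y) ^ k \<le> of_nat (poly P k)" using y by (simp add: power_mult_distrib)
  qed
  hence "X * y \<le> 1" using tempered P unfolding tempered_growth_def by blast
  hence "X * y * D \<le> 1 * D" using aura_mult_mono order_refl by blast
  moreover have "X * y * D = X" using y by (metis mult.assoc mult.commute mult_1_right)
  ultimately show ?thesis by simp
qed

context
  fixes f :: "'a::comm_ring_1 \<Rightarrow> 'r"
  assumes halo: "halo_morphism_from_ring f" and pow_mult: "power_multiplicative f"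
begin

lemma f_zero: "f 0 = 0"
  using halo unfolding halo_morphism_from_ring_def by blast

lemma f_one: "f 1 = 1"
  using halo unfolding halo_morphism_from_ring_def by blast

lemma f_add_le: "f (a + b) \<le> f a + f b"
  using halo unfolding halo_morphism_from_ring_def by blast

lemma f_mult_le: "f (a * b) \<le> f a * f b"
  using halo unfolding halo_morphism_from_ring_def by blast

lemma f_power: "f (a ^ n) = f a ^ n"
  using pow_mult unfolding power_multiplicative_def by blast

lemma f_sum_le: "f (sum g S) \<le> (\<Sum>i\<in>S. f (g i))"
proof (induction S rule: infinite_finite_induct)
  case (insert x F)
  have "f (sum g (insert x F)) = f (g x + sum g F)" using insert by simp
  also have "\<dots> \<le> f (g x) + f (sum g F)" by (rule f_add_le)
  also have "\<dots> \<le> f (g x) + (\<Sum>i\<in>F. f (g i))" using aura_add_mono[OF order_refl insert.IH] .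
  finally show ?case using insert by simp
qed (auto simp: f_zero)

lemma f_of_nat_le: "f (of_nat n) \<le> of_nat n"
proof (induction n)
  case 0
  then show ?case by (simp add: f_zero)
next
  case (Suc n)
  have "f (of_nat (Suc n)) \<le> f 1 + f (of_nat n)" using f_add_le[of 1] by simp
  also have "\<dots> \<le> 1 + of_nat n" using aura_add_mono[OF order_refl Suc.IH] f_one by simp
  finally show ?case by simp
qed

lemma f_minus_one: "f (-1) = 1"
proof -
  have sq: "f (-1) * f (-1) = 1" using f_power[of "-1" 2] f_one by (simp add: power2_eq_square)
  show ?thesis
  proof (cases "f (-1) \<le> 1")
    case True
    have "f (-1) * f (-1) \<le> 1 * f (-1)" using aura_mult_mono[OF True order_refl] .
    then show ?thesis using sq True by simp
  next
    case False
    hence "1 \<le> f (-1)" by simp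
    have "1 * f (-1) \<le> f (-1) * f (-1)" using aura_mult_mono[OF \<open>1 \<le> f (-1)\<close> order_refl] .
    then show ?thesis using sq False by simp
  qed
qed

lemma f_minus: "f (- x) = f x"
proof -
  have "f (- x) \<le> f x" using f_mult_le[of "-1" x] f_minus_one by simp
  moreover have "f x \<le> f (- x)" using f_mult_le[of "-1" "-x"] f_minus_one by simp
  ultimately show ?thesis by simp
qed

lemma f_of_int: "f (of_int n) = f (of_nat (nat \<bar>n\<bar>))"
proof (cases "0 \<le> n")
  case True
  then show ?thesis by (metis abs_of_nonneg of_int_of_nat_eq int_nat_eq nat_0_le)
next
  case False
  then have "of_int n = - (of_nat (nat \<bar>n\<bar>) :: 'a)"
    by (metis abs_of_neg int_nat_eq minus_minus not_le of_int_minus of_int_of_nat_eq abs_ge_zero nat_0_le)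
  then show ?thesis by (simp add: f_minus)
qed

text \<open>Induction along the base-\<open>m\<close> expansion: \<open>N = m q + r\<close> with \<open>r < m\<close>.\<close>

lemma f_of_nat_le_digits:
  assumes m: "1 \<le> m" and M: "1 \<le> M" and fm: "f (of_nat m) \<le> M"
  shows "N \<le> m ^ j \<Longrightarrow> f (of_nat N) \<le> of_nat ((j + 1) * m) * M ^ j"
proof (induction j arbitrary: N)
  case 0
  hence "N \<le> m" using m by simp
  have "f (of_nat N) \<le> of_nat N" by (rule f_of_nat_le)
  also have "\<dots> \<le> of_nat m" using \<open>N \<le> m\<close> aura_of_nat_mono by blast
  finally show ?case by simp
next
  case (Suc j)
  define q where "q = N div m"
  define r where "r = N mod m"
  have N: "N = m * q + r" by (simp add: q_def r_def)
  have r: "r < m" using m by (simp add: r_def)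
  have "q \<le> m ^ Suc j div m" using Suc.prems div_le_mono q_def by blast
  hence q: "q \<le> m ^ j" using m by simp
  have "f (of_nat N) = f (of_nat m * of_nat q + of_nat r)" by (simp add: N)
  also have "\<dots> \<le> f (of_nat m * of_nat q) + f (of_nat r)" by (rule f_add_le)
  also have "\<dots> \<le> M * (of_nat ((j + 1) * m) * M ^ j) + of_nat m"
  proof (rule aura_add_mono)
    show "f (of_nat m * of_nat q) \<le> M * (of_nat ((j + 1) * m) * M ^ j)"
      by (rule order_trans[OF f_mult_le aura_mult_mono[OF fm Suc.IH[OF q]]])
    show "f (of_nat r) \<le> of_nat m"
      using order_trans[OF f_of_nat_le aura_of_nat_mono[of r m]] r by simp
  qed
  also have "\<dots> \<le> M * (of_nat ((j + 1) * m) * M ^ j) + of_nat m * M ^ Suc j"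
    using aura_mult_mono[OF order_refl aura_one_le_power[OF M], of "of_nat m" "Suc j"]
    by (intro aura_add_mono) simp_all
  also have "\<dots> = of_nat ((Suc j + 1) * m) * M ^ Suc j" by (simp add: algebra_simps)
  finally show ?case .
qed

lemma f_of_nat_power_le:
  assumes tempered: "tempered_growth TT"
    and m: "1 \<le> m" and M: "1 \<le> M" and fm: "f (of_nat m) \<le> M" and le: "n ^ q \<le> m ^ p"
  shows "f (of_nat n) ^ q \<le> M ^ p"
proof (rule tempered_growth_le[OF tempered, of "[:m, p * m:]"])
  show "[:m, p * m:] \<noteq> 0" using m by simp
  show "M ^ p \<noteq> 0" using aura_one_le_power[OF M, of p] aura_zero_less_one by auto
  fix k
  have "(f (of_nat n) ^ q) ^ k = f (of_nat (n ^ (q * k)))" by (simp add: f_power power_mult)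
  also have "\<dots> \<le> of_nat ((p * k + 1) * m) * M ^ (p * k)"
    using le by (intro f_of_nat_le_digits[OF m M fm]) (simp add: power_mult power_mono)
  also have "\<dots> = of_nat (poly [:m, p * m:] k) * (M ^ p) ^ k"
    by (simp add: power_mult[symmetric] algebra_simps)
  finally show "(f (of_nat n) ^ q) ^ k \<le> of_nat (poly [:m, p * m:] k) * (M ^ p) ^ k" .
qed

lemma f_binomial_term_le:
  assumes "k \<le> n" and C: "1 \<le> C" "f 2 \<le> C" and M: "f a \<le> M" "f b \<le> M"
  shows "f (of_nat (n choose k) * a ^ k * b ^ (n - k)) \<le> of_nat ((n + 1) * 2) * C ^ n * M ^ n"
proof -
  have "f (of_nat (n choose k)) \<le> of_nat ((n + 1) * 2) * C ^ n"
    using C by (intro f_of_nat_le_digits) (auto simp: binomial_le_pow2)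
  have "f (of_nat (n choose k) * a ^ k * b ^ (n - k))
      \<le> f (of_nat (n choose k) * a ^ k) * f (b ^ (n - k))" by (rule f_mult_le)
  also have "\<dots> \<le> f (of_nat (n choose k)) * f a ^ k * f b ^ (n - k)"
    by (simp only: f_power[symmetric]) (rule aura_mult_mono[OF f_mult_le order_refl])
  also have "\<dots> \<le> of_nat ((n + 1) * 2) * C ^ n * M ^ k * M ^ (n - k)"
    by (intro aura_mult_mono aura_power_mono M \<open>f (of_nat (n choose k)) \<le> _\<close>)
  also have "\<dots> = of_nat ((n + 1) * 2) * C ^ n * M ^ n"
    using \<open>k \<le> n\<close> by (simp add: mult.assoc power_add[symmetric])
  finally show ?thesis .
qed

lemma f_add_power_le:
  assumes C: "1 \<le> C" "f 2 \<le> C" and M: "f a \<le> M" "f b \<le> M"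
  shows "f (a + b) ^ n \<le> of_nat (poly [:2, 4, 2:] n) * (C * M) ^ n"
proof -
  have "f (a + b) ^ n = f (\<Sum>k\<le>n. of_nat (n choose k) * a ^ k * b ^ (n - k))"
    by (simp add: f_power[symmetric] binomial_ring)
  also have "\<dots> \<le> (\<Sum>k\<le>n. f (of_nat (n choose k) * a ^ k * b ^ (n - k)))" by (rule f_sum_le)
  also have "\<dots> \<le> (\<Sum>k\<le>n. of_nat ((n + 1) * 2) * C ^ n * M ^ n)"
    using f_binomial_term_le[OF _ C M] by (intro aura_sum_mono) simp
  also have "\<dots> = of_nat (poly [:2, 4, 2:] n) * (C * M) ^ n"
  proof -
    have "poly [:2, 4, 2:] n = (n + 1) * ((n + 1) * 2)" by (simp add: algebra_simps)
    then show ?thesis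
      by (simp only: sum_constant card_atMost of_nat_mult power_mult_distrib mult.assoc Suc_eq_plus1)
  qed
  finally show ?thesis .
qed

lemma f_pre_archimedean:
  assumes tempered: "tempered_growth TT"
  shows "f (a + b) \<le> max (f 2) 1 * max (f a) (f b)"
proof -
  define C where "C = max (f 2) 1"
  define M where "M = max (f a) (f b)"
  have C: "1 \<le> C" "f 2 \<le> C" and M: "f a \<le> M" "f b \<le> M" by (auto simp: C_def M_def)
  have "f (a + b) \<le> C * M"
  proof (cases "M = 0")
    case True
    then have "f a = 0" "f b = 0" using M aura_nonneg[of "f a"] aura_nonneg[of "f b"] by auto
    then have "f (a + b) \<le> 0" using f_add_le[of a b] by simp
    then show ?thesis using aura_nonneg order_trans by blast
  next
    case False
    have "C \<noteq> 0" using C(1) aura_zero_less_one by auto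
    with False have CM: "C * M \<noteq> 0" using aura_no_zero_divisors by blast
    show ?thesis
      by (rule tempered_growth_le[OF tempered _ CM f_add_power_le[OF C M]]) simp
  qed
  thus ?thesis by (simp add: C_def M_def)
qed

context
  assumes tempered: "tempered_growth TT" and two: "1 < f 2"
begin

lemma f_of_nat_ge_one: "1 \<le> m \<Longrightarrow> 1 \<le> f (of_nat m)"
proof -
  assume m: "1 \<le> m"
  show ?thesis
  proof (cases "m = 1")
    case True
    then show ?thesis by (simp add: f_one)
  next
    case False
    hence "2 ^ 1 \<le> m ^ 1" using m by simp
    from f_of_nat_power_le[OF tempered m _ _ this, of "max 1 (f (of_nat m))"]
    have "f 2 \<le> max 1 (f (of_nat m))" by simp
    then show ?thesis using two by (auto simp: max_def split: if_splits)
  qed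
qed

lemma f_of_nat_power_mono: "1 \<le> m \<Longrightarrow> n ^ q \<le> m ^ p \<Longrightarrow> f (of_nat n) ^ q \<le> f (of_nat m) ^ p"
  using f_of_nat_power_le[OF tempered _ f_of_nat_ge_one order_refl] by blast

lemma f_of_nat_mono: "n \<le> m \<Longrightarrow> f (of_nat n) \<le> f (of_nat m)"
  using f_of_nat_power_mono[of m n 1 1] by (cases "m = 0") auto

text \<open>With \<open>2\<^sup>r\<^sup>1 \<le> a\<^sup>k < 2\<^sup>r\<^sup>1\<^sup>+\<^sup>1\<close> and \<open>2\<^sup>r\<^sup>2 \<le> c\<^sup>k < 2\<^sup>r\<^sup>2\<^sup>+\<^sup>1\<close>:
  \<open>|a|\<^sup>k |c|\<^sup>k \<le> |2|\<^sup>r\<^sup>1\<^sup>+\<^sup>r\<^sup>2\<^sup>+\<^sup>2 \<le> 4 |ac|\<^sup>k\<close>, and tempered growth absorbs the constant 4.\<close>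

lemma f_of_nat_mult: "f (of_nat (a * c)) = f (of_nat a) * f (of_nat c)"
proof (cases "a = 0 \<or> c = 0")
  case True
  then show ?thesis by (auto simp: f_zero)
next
  case False
  hence ac: "1 \<le> a * c" "1 \<le> a" "1 \<le> c" by auto
  have "f (of_nat a) * f (of_nat c) \<le> f (of_nat (a * c))"
  proof (rule tempered_growth_le[OF tempered, of "[:4:]"])
    show "[:4:] \<noteq> (0::nat poly)" by simp
    show "f (of_nat (a * c)) \<noteq> 0" using f_of_nat_ge_one[OF ac(1)] aura_zero_less_one by auto
    fix k
    obtain r1 where r1: "2 ^ r1 \<le> a ^ k" "a ^ k < 2 ^ (r1 + 1)"
      using ex_power_ivl1[of 2 "a ^ k"] ac by auto
    obtain r2 where r2: "2 ^ r2 \<le> c ^ k" "c ^ k < 2 ^ (r2 + 1)"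
      using ex_power_ivl1[of 2 "c ^ k"] ac by auto
    have four: "f 2 ^ 2 \<le> (of_nat 4::'r)"
      using aura_power_mono[of "f 2" 2 2] f_of_nat_le[of 2] by simp
    have "(f (of_nat a) * f (of_nat c)) ^ k = f (of_nat a) ^ k * f (of_nat c) ^ k"
      by (simp add: power_mult_distrib)
    also have "\<dots> \<le> f (of_nat 2) ^ (r1 + 1) * f (of_nat 2) ^ (r2 + 1)"
      using r1 r2 by (intro aura_mult_mono f_of_nat_power_mono) auto
    also have "\<dots> = f 2 ^ 2 * f (of_nat 2) ^ (r1 + r2)"
      by (simp add: power_add power2_eq_square mult_ac)
    also have "\<dots> \<le> of_nat 4 * f (of_nat (a * c)) ^ k"
    proof (rule aura_mult_mono[OF four f_of_nat_power_mono[OF ac(1)]])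
      have "2 ^ (r1 + r2) = 2 ^ r1 * (2::nat) ^ r2" by (simp add: power_add)
      also have "\<dots> \<le> a ^ k * c ^ k" using r1 r2 by (intro mult_le_mono) auto
      finally show "2 ^ (r1 + r2) \<le> (a * c) ^ k" by (simp add: power_mult_distrib)
    qed
    finally show "(f (of_nat a) * f (of_nat c)) ^ k \<le> of_nat (poly [:4:] k) * f (of_nat (a * c)) ^ k"
      by simp
  qed
  moreover have "f (of_nat (a * c)) \<le> f (of_nat a) * f (of_nat c)"
    using f_mult_le by (metis of_nat_mult)
  ultimately show ?thesis by simp
qed

lemma two_mult_power_le_Suc_power: "1 \<le> (n::nat) \<Longrightarrow> \<exists>k. 2 * n ^ k \<le> (n + 1) ^ k"
proof -
  assume n: "1 \<le> n"
  have "1 < real (n + 1) / real n" using n by simp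
  then obtain k where k: "2 < (real (n + 1) / real n) ^ k" using real_arch_pow by blast
  have "0 < real n ^ k" using n by simp
  with k have "2 * real n ^ k < (real (n + 1) / real n) ^ k * real n ^ k"
    by (rule mult_strict_right_mono)
  also have "\<dots> = real (n + 1) ^ k" using n by (simp add: power_divide)
  finally have "real (2 * n ^ k) < real ((n + 1) ^ k)" by simp
  thus ?thesis by (intro exI[of _ k]) (simp only: of_nat_less_iff less_imp_le)
qed

lemma f_of_nat_strict_mono: "n < m \<Longrightarrow> f (of_nat n) < f (of_nat m)"
proof (rule ccontr)
  assume nm: "n < m" and "\<not> f (of_nat n) < f (of_nat m)"
  hence "f (of_nat m) \<le> f (of_nat n)" by simp
  moreover have "f (of_nat (n + 1)) \<le> f (of_nat m)" using nm by (intro f_of_nat_mono) simp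
  ultimately have "f (of_nat (n + 1)) \<le> f (of_nat n)" by simp
  show False
  proof (cases "n = 0")
    case True
    then show False using \<open>f (of_nat (n + 1)) \<le> f (of_nat n)\<close> f_zero f_one aura_zero_less_one by simp
  next
    case False
    hence n: "1 \<le> n" by simp
    obtain k where k: "2 * n ^ k \<le> (n + 1) ^ k" using two_mult_power_le_Suc_power[OF n] by blast
    have "f 2 * f (of_nat n) ^ k = f (of_nat (2 * n ^ k))"
      by (simp only: f_of_nat_mult of_nat_power f_power) simp
    also have "\<dots> \<le> f (of_nat ((n + 1) ^ k))" using k by (rule f_of_nat_mono)
    also have "\<dots> = f (of_nat (n + 1)) ^ k" by (simp only: of_nat_power f_power)
    also have "\<dots> \<le> 1 * f (of_nat n) ^ k"
      using aura_power_mono[OF \<open>f (of_nat (n + 1)) \<le> f (of_nat n)\<close>] by simp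
    finally have "f 2 \<le> 1"
      by (rule aura_mult_right_le_cancel[rotated])
        (use aura_one_le_power[OF f_of_nat_ge_one[OF n], of k] aura_zero_less_one in auto)
    then show False using two by simp
  qed
qed

lemma f_of_nat_mult_le_iff: "f (of_nat A) * f (of_nat C) \<le> f (of_nat B) \<longleftrightarrow> A * C \<le> B"
proof
  assume "A * C \<le> B"
  then have "f (of_nat (A * C)) \<le> f (of_nat B)" by (rule f_of_nat_mono)
  then show "f (of_nat A) * f (of_nat C) \<le> f (of_nat B)" by (simp only: f_of_nat_mult)
next
  assume "f (of_nat A) * f (of_nat C) \<le> f (of_nat B)"
  then have "\<not> f (of_nat B) < f (of_nat (A * C))" by (simp only: f_of_nat_mult not_less)
  then show "A * C \<le> B" using f_of_nat_strict_mono[of B "A * C"] by linarith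
qed

lemma mult_equiv_arch_abs: "mult_equiv (\<lambda>n::int. f (of_int n)) arch_abs"
proof -
  have arch: "arch_abs n = of_nat (nat \<bar>n\<bar>)" for n :: int
  proof -
    have "max n (- n) = int (nat \<bar>n\<bar>)" by arith
    then show ?thesis unfolding arch_abs_def by (simp only: of_int_of_nat_eq)
  qed
  have rat: "(of_nat A::rat) * of_nat C \<le> of_nat B \<longleftrightarrow> A * C \<le> B" for A B C :: nat
    by (simp only: of_nat_mult[symmetric] of_nat_le_iff)
  show ?thesis
    unfolding mult_equiv_def mult_le_def f_of_int arch rat f_of_nat_mult_le_iff by blast
qed

end

end

end

theorem theorem2p8:
  fixes f :: "'a::comm_ring_1 \<Rightarrow> 'r::{comm_semiring_1,linorder}"
  assumes "pos_tot_aura TYPE('r)"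
    and "tempered_growth TYPE('r)"
    and "halo_morphism_from_ring f"
    and "power_multiplicative f"
  shows "(\<forall>a b. f (a + b) \<le> max (f 2) 1 * max (f a) (f b)) \<and>
         (f 2 > 1 \<longrightarrow> mult_equiv (\<lambda>n::int. f (of_int n)) arch_abs)"
  using f_pre_archimedean[OF assms(1,3,4,2)] mult_equiv_arch_abs[OF assms(1,3,4,2)] by blast

end
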